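(* Let $s\ge 1$, $r\ge 1$, let $n_1,\ldots,n_r\ge 1$ be integers, and let $\sigma_1,\ldots,\sigma_r$ be semi-characters each of which is a finite product (possibly empty, giving the trivial semi-character $\boldsymbol{1}$) of the maps $\chi_{t_1},\ldots,\chi_{t_s}$. Then the multiple zeta value $$\zeta_C\begin{pmatrix}\sigma_1&\cdots&\sigma_r\\ n_1&\cdots&n_r\end{pmatrix}$$ belongs to the Tate algebra $\mathbb{T}_s$, and the function it defines on $\{(z_1,\ldots,z_s)\in\mathbb{C}_\infty^s:|z_i|\le 1\}$ extends to an entire function $\mathbb{C}_\infty^s\to\mathbb{C}_\infty$ (i.e. it is given by a power series in $t_1,\ldots,t_s$ with coefficients in $\mathbb{C}_\infty$ converging on all of $\mathbb{C}_\infty^s$).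
   Context: $q$ is a power of a prime $p$, $A=\mathbb{F}_q[\theta]$, $K=\mathbb{F}_q(\theta)$, $K_\infty=\mathbb{F}_q((1/\theta))$, $\mathbb{C}_\infty$ the completion of an algebraic closure of $K_\infty$ with absolute value $|\cdot|$ normalized by $|\theta|=q$. $A^+$ is the set of monic polynomials of $A$ and $A^+(d)$ those of degree $d$. $t_1,\ldots,t_s$ are indeterminates; for $a\in A$, $a(t_i)$ denotes the polynomial obtained by replacing $\theta$ by $t_i$, and $\chi_{t_i}:A^+\to\mathbb{F}_q[t_1,\ldots,t_s]$, $a\mapsto a(t_i)$. A semi-character is a multiplicative monoid map from $A^+$; products of semi-characters are taken pointwise. $\mathbb{T}_s$ is the Tate algebra: formal power series in $t_1,\ldots,t_s$ with coefficients in $\mathbb{C}_\infty$ tending to $0$, with the Gauss norm. For a semi-character $\sigma$ and integers $n,d\ge0$, $S_d(n;\sigma)=\sum_{a\in A^+(d)}a^{-n}\sigma(a)$, and $$S_d\begin{pmatrix}\sigma_1&\cdots&\sigma_r\\ n_1&\cdots&n_r\end{pmatrix}=S_d(n_1;\sigma_1)\sum_{d>i_2>\cdots>i_r\ge0}S_{i_2}(n_2;\sigma_2)\cdots S_{i_r}(n_r;\sigma_r),$$ $$\zeta_C\begin{pmatrix}\sigma_1&\cdots&\sigma_r\\ n_1&\cdots&n_r\end{pmatrix}=\sum_{d\ge0}S_d\begin{pmatrix}\sigma_1&\cdots&\sigma_r\\ n_1&\cdots&n_r\end{pmatrix}.$$ *)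

theory Defs
  imports "HOL-Computational_Algebra.Computational_Algebra"
begin

text \<open>
  F_q is a finite field type 'a, q = CARD('a).
  A = F_q[theta] is 'a poly.  K_infinity = F_q((1/theta)) is realised as the
  formal Laurent series 'a fls in the variable X = 1/theta, so theta = fls_X_inv.
  The absolute value is |f| = q^(- subdegree_X f), so that |theta| = q.
  Since all coefficients (in t_1..t_s) of the multiple zeta value lie in K_infinity,
  (a closed subfield of C_infinity on which the absolute value restricts), the
  series is represented by its coefficient function on multi-indices.
\<close>

definition Kinf_of_poly :: "'a::field poly \<Rightarrow> 'a fls" where
  "Kinf_of_poly a = (\<Sum>i\<le>degree a. fls_const (coeff a i) * fls_X_inv ^ i)"

definition absK :: "'a::{finite,field} fls \<Rightarrow> real" where
  "absK f = (if f = 0 then 0 else real (card (UNIV :: 'a set)) powr (- real_of_int (fls_subdegree f)))"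

definition monics :: "nat \<Rightarrow> 'a::field poly set" where
  "monics d = {a. lead_coeff a = 1 \<and> degree a = d}"

text \<open>Multi-indices for monomials in t_0, ..., t_(s-1).\<close>
definition Idx :: "nat \<Rightarrow> (nat \<Rightarrow> nat) set" where
  "Idx s = {\<alpha>. \<forall>i\<ge>s. \<alpha> i = 0}"

definition mdeg :: "nat \<Rightarrow> (nat \<Rightarrow> nat) \<Rightarrow> nat" where
  "mdeg s \<alpha> = (\<Sum>i<s. \<alpha> i)"

text \<open>
  The semi-character sigma_j (j < r) is the product prod_(i<s) chi_(t_i)^(m j i),
  i.e. sigma_j(a) = prod_(i<s) a(t_i)^(m j i); m j i = 0 for all i gives the trivial one.
  For a tuple (a_0,...,a_(r-1)) of monic polynomials, the product
  prod_j sigma_j(a_j) = prod_(i<s) P_i(t_i) with P_i = prod_j a_j^(m j i),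
  hence its coefficient of t^alpha is prod_(i<s) coeff P_i (alpha i).
\<close>
definition char_coeff ::
  "nat \<Rightarrow> nat \<Rightarrow> (nat \<Rightarrow> nat \<Rightarrow> nat) \<Rightarrow> (nat \<Rightarrow> 'a::field poly) \<Rightarrow> (nat \<Rightarrow> nat) \<Rightarrow> 'a" where
  "char_coeff s r m as \<alpha> = (\<Prod>i<s. coeff (\<Prod>j<r. (as j) ^ (m j i)) (\<alpha> i))"

text \<open>
  Tuples (a_0,...,a_(r-1)) of monic polynomials with deg a_0 = d > deg a_1 > ... > deg a_(r-1)
  (indices shifted by one w.r.t. the paper: a_0 here is the paper's a_1).
\<close>
definition tuples :: "nat \<Rightarrow> nat \<Rightarrow> (nat \<Rightarrow> 'a::field poly) set" where
  "tuples r d = {as \<in> {..<r} \<rightarrow>\<^sub>E {a. lead_coeff a = 1}.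
      degree (as 0) = d \<and> (\<forall>j. Suc j < r \<longrightarrow> degree (as (Suc j)) < degree (as j))}"

text \<open>
  Coefficient of t^alpha in S_d(sigma_1 ... sigma_r; n_1 ... n_r) (multiplied out):
  sum over the tuples of prod_j a_j^(-n_j) times the coefficient of t^alpha of prod_j sigma_j(a_j).
\<close>
definition S_coeff ::
  "nat \<Rightarrow> nat \<Rightarrow> (nat \<Rightarrow> nat \<Rightarrow> nat) \<Rightarrow> (nat \<Rightarrow> nat) \<Rightarrow> nat \<Rightarrow> (nat \<Rightarrow> nat) \<Rightarrow> 'a::field fls" where
  "S_coeff s r m n d \<alpha> =
     (\<Sum>as\<in>tuples r d. (\<Prod>j<r. inverse (Kinf_of_poly (as j)) ^ (n j))
                         * fls_const (char_coeff s r m as \<alpha>))"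

end

theory Submission
  imports Defs
begin

text \<open>
  Write \<open>X = 1/\<theta>\<close> and describe a monic \<open>a\<close> of degree \<open>d\<close> by its lower coefficients
  \<open>x\<^sub>1, \<dots>, x\<^sub>d\<close>. Then \<open>a\<^sup>-\<^sup>1 = X^d (1 + x\<^sub>1 X + \<dots> + x\<^sub>d X^d)\<^sup>-\<^sup>1\<close>, so the coefficient of
  \<open>X^(d + k)\<close> in \<open>a\<^sup>-\<^sup>1\<close> is a polynomial in the \<open>x\<^sub>j\<close> of weight at most \<open>k\<close>, \<open>x\<^sub>j\<close> having
  weight \<open>j\<close>, while the \<open>t\<close>-coefficients of \<open>\<sigma>\<^sub>1(a)\<close> are polynomials of degree at most
  \<open>M = deg \<sigma>\<^sub>1\<close> in the \<open>x\<^sub>j\<close>. Summed over \<open>x \<in> \<bbbF>\<^sub>q^d\<close>, a monomial vanishes unless it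
  involves every \<open>x\<^sub>j\<close>, and a monomial of weight at most \<open>k\<close> and degree at most \<open>M\<close>
  involving all of them forces \<open>(d - M)(d - M + 1) \<le> 2k\<close>. Hence the \<open>X^k\<close>-coefficient of
  \<open>S\<^sub>d\<close> vanishes for \<open>d > k + M\<close>, and the series converges coefficientwise, uniformly in
  the \<open>t\<close>-monomial. Since \<open>S\<^sub>d\<close> only involves \<open>t\<close>-monomials of degree \<open>O(d)\<close>, the
  coefficient of \<open>t^\<alpha>\<close> is moreover bounded by \<open>2^(-c |\<alpha>|\<^sup>2)\<close> for some \<open>c > 0\<close>,
  which beats every \<open>R^|\<alpha>|\<close>.
\<close>

unbundle fps_syntax

section \<open>Sums of functions of few coordinates\<close>

definition depends_only_on :: "'i set \<Rightarrow> (('i \<Rightarrow> 'a) \<Rightarrow> 'b) \<Rightarrow> bool" where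
  "depends_only_on S g \<longleftrightarrow> (\<forall>x y. (\<forall>i\<in>S. x i = y i) \<longrightarrow> g x = g y)"

text \<open>
  They stand in for polynomials in the coordinates whose monomials are restricted by \<open>P\<close>.
\<close>
inductive_set local_span :: "('i set \<Rightarrow> bool) \<Rightarrow> (('i \<Rightarrow> 'a) \<Rightarrow> 'b::comm_ring_1) set"
  for P :: "'i set \<Rightarrow> bool" where
  local_span_zero: "(\<lambda>_. 0) \<in> local_span P"
| local_span_addI:
    "P S \<Longrightarrow> depends_only_on S g \<Longrightarrow> h \<in> local_span P \<Longrightarrow> (\<lambda>x. g x + h x) \<in> local_span P"

lemma local_span_single: "P S \<Longrightarrow> depends_only_on S g \<Longrightarrow> g \<in> local_span P"
  using local_span_addI[OF _ _ local_span_zero, of P S g] by simp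

lemma local_span_const: "P {} \<Longrightarrow> (\<lambda>_. c) \<in> local_span P"
  by (rule local_span_single) (simp_all add: depends_only_on_def)

lemma local_span_add:
  assumes "f \<in> local_span P" "h \<in> local_span P"
  shows "(\<lambda>x. f x + h x) \<in> local_span P"
  using assms(1)
proof (induction f rule: local_span.induct)
  case local_span_zero
  show ?case using assms(2) by simp
next
  case (local_span_addI S g f)
  from local_span.local_span_addI[OF local_span_addI(1,2,4)] show ?case
    by (simp add: add.assoc)
qed

lemma local_span_sum:
  "(\<And>i. i \<in> A \<Longrightarrow> f i \<in> local_span P) \<Longrightarrow> (\<lambda>x. \<Sum>i\<in>A. f i x) \<in> local_span P"
  by (induction A rule: infinite_finite_induct)
    (simp_all add: local_span_zero local_span_add)

lemma local_span_uminus: "f \<in> local_span P \<Longrightarrow> (\<lambda>x. - f x) \<in> local_span P"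
proof (induction f rule: local_span.induct)
  case local_span_zero then show ?case by (simp add: local_span.local_span_zero)
next
  case (local_span_addI S g h)
  have "depends_only_on S (\<lambda>x. - g x)"
    using local_span_addI(2) by (simp add: depends_only_on_def)
  from local_span.local_span_addI[OF local_span_addI(1) this local_span_addI(4)] show ?case
    by simp
qed

lemma depends_only_on_mult:
  "depends_only_on S g \<Longrightarrow> depends_only_on S' h \<Longrightarrow> depends_only_on (S \<union> S') (\<lambda>x. g x * h x)"
  unfolding depends_only_on_def by (metis UnCI)

lemma local_span_mult_depends_only_on:
  assumes "h \<in> local_span Q" "depends_only_on S g" "\<And>S'. Q S' \<Longrightarrow> R (S \<union> S')"
  shows "(\<lambda>x. g x * h x) \<in> local_span R"
  using assms(1)
proof (induction h rule: local_span.induct)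
  case local_span_zero then show ?case by (simp add: local_span.local_span_zero)
next
  case (local_span_addI S' g' h)
  have "(\<lambda>x. g x * g' x + g x * h x) \<in> local_span R"
    by (rule local_span.local_span_addI[OF assms(3)[OF local_span_addI(1)]
          depends_only_on_mult[OF assms(2) local_span_addI(2)] local_span_addI(4)])
  then show ?case by (simp add: distrib_left)
qed

lemma local_span_mult:
  assumes "f \<in> local_span P" "h \<in> local_span Q" "\<And>S S'. P S \<Longrightarrow> Q S' \<Longrightarrow> R (S \<union> S')"
  shows "(\<lambda>x. f x * h x) \<in> local_span R"
  using assms(1)
proof (induction f rule: local_span.induct)
  case local_span_zero then show ?case by (simp add: local_span.local_span_zero)
next
  case (local_span_addI S g f)
  have "(\<lambda>x. g x * h x) \<in> local_span R"
    using assms(2,3) local_span_addI(1,2) by (blast intro: local_span_mult_depends_only_on)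
  from local_span_add[OF this local_span_addI(4)] show ?case by (simp add: distrib_right)
qed

lemma of_nat_CARD_eq_0: "(of_nat (card (UNIV :: 'a set)) :: 'a::{finite,field}) = 0"
proof -
  have "(\<Sum>c\<in>(UNIV::'a set). c + 1) = (\<Sum>c\<in>UNIV. c)"
    by (rule sum.reindex_bij_witness[of _ "\<lambda>c. c - 1" "\<lambda>c. c + 1"]) auto
  then show ?thesis by (simp add: sum.distrib)
qed

text \<open>Summing over a coordinate that \<open>g\<close> ignores multiplies by \<open>q = 0\<close>.\<close>
lemma sum_PiE_eq_0_if_depends_only_on:
  fixes g :: "('i \<Rightarrow> 'a::{finite,field}) \<Rightarrow> 'a"
  assumes "depends_only_on S g" "i \<in> D" "i \<notin> S" "finite D"
  shows "(\<Sum>x\<in>D \<rightarrow>\<^sub>E UNIV. g x) = 0"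
proof -
  define D' where "D' = D - {i}"
  have D: "D = insert i D'" "i \<notin> D'" using assms(2) by (auto simp: D'_def)
  have "(\<Sum>x\<in>D \<rightarrow>\<^sub>E UNIV. g x) = (\<Sum>(c, h)\<in>UNIV \<times> (D' \<rightarrow>\<^sub>E UNIV). g (h(i := c)))"
    unfolding D(1) PiE_insert_eq
    by (subst sum.reindex) (auto intro!: inj_combinator[OF D(2)] simp: case_prod_beta)
  also have "\<dots> = (\<Sum>c\<in>UNIV. \<Sum>h\<in>D' \<rightarrow>\<^sub>E UNIV. g (h(i := c)))"
    by (simp add: sum.cartesian_product)
  also have "\<dots> = (\<Sum>c\<in>(UNIV::'a set). \<Sum>h\<in>D' \<rightarrow>\<^sub>E UNIV. g h)"
    using assms(1,3) unfolding depends_only_on_def by (intro sum.cong refl) (metis fun_upd_other)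
  also have "\<dots> = of_nat (card (UNIV :: 'a set)) * (\<Sum>h\<in>D' \<rightarrow>\<^sub>E UNIV. g h)"
    by simp
  finally show ?thesis by (simp add: of_nat_CARD_eq_0)
qed

lemma sum_PiE_local_span_eq_0:
  fixes g :: "('i \<Rightarrow> 'a::{finite,field}) \<Rightarrow> 'a"
  assumes "g \<in> local_span P" "\<And>S. P S \<Longrightarrow> \<not> D \<subseteq> S" "finite D"
  shows "(\<Sum>x\<in>D \<rightarrow>\<^sub>E UNIV. g x) = 0"
  using assms(1)
proof (induction g rule: local_span.induct)
  case local_span_zero then show ?case by simp
next
  case (local_span_addI S g h)
  obtain i where "i \<in> D" "i \<notin> S" using assms(2)[OF local_span_addI(1)] by blast
  with sum_PiE_eq_0_if_depends_only_on[OF local_span_addI(2) _ _ assms(3)] local_span_addI(4)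
  show ?case by (simp add: sum.distrib)
qed

section \<open>Monic polynomials and their inverses in \<open>K\<^sub>\<infinity>\<close>\<close>

text \<open>
  Coordinate \<open>x j\<close> is the coefficient of \<open>\<theta>^(d - j)\<close>, so it enters the expansion of
  \<open>a\<^sup>-\<^sup>1\<close> in \<open>1/\<theta>\<close> only from the relative order \<open>j\<close> on.
\<close>
definition monic_poly :: "nat \<Rightarrow> (nat \<Rightarrow> 'a::comm_ring_1) \<Rightarrow> 'a poly" where
  "monic_poly d x = monom 1 d + (\<Sum>j\<in>{1..d}. monom (x j) (d - j))"

lemma coeff_monic_poly:
  "coeff (monic_poly d x) i = (if i = d then 1 else if i < d then x (d - i) else 0)"
proof -
  have "(\<Sum>j\<in>{1..d}. coeff (monom (x j) (d - j)) i) = (\<Sum>j\<in>{1..d}. if j = d - i \<and> i < d then x j else 0)"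
    by (intro sum.cong refl) (auto simp: coeff_monom)
  also have "\<dots> = (if i < d then x (d - i) else 0)"
    by (cases "i < d") (simp_all add: sum.delta)
  finally show ?thesis by (simp add: monic_poly_def coeff_sum coeff_monom)
qed

lemma degree_monic_poly [simp]: "degree (monic_poly d x) = d"
  by (rule antisym) (auto intro!: degree_le le_degree simp: coeff_monic_poly)

lemma bij_betw_monic_poly:
  "bij_betw (monic_poly d) ({1..d} \<rightarrow>\<^sub>E (UNIV :: 'a::field set)) (monics d)"
proof (rule bij_betw_imageI)
  show "inj_on (monic_poly d) ({1..d} \<rightarrow>\<^sub>E (UNIV :: 'a set))"
  proof (rule inj_onI)
    fix x y assume x: "x \<in> {1..d} \<rightarrow>\<^sub>E UNIV" and y: "y \<in> {1..d} \<rightarrow>\<^sub>E UNIV"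
      and eq: "monic_poly d x = monic_poly d y"
    show "x = y"
    proof (rule PiE_ext[OF x y])
      fix j assume "j \<in> {1..d}"
      then have "d - j < d" "d - (d - j) = j" by auto
      with arg_cong[OF eq, of "\<lambda>a. coeff a (d - j)"] show "x j = y j"
        by (simp add: coeff_monic_poly)
    qed
  qed
  show "monic_poly d ` ({1..d} \<rightarrow>\<^sub>E (UNIV :: 'a set)) = monics d"
  proof (intro equalityI subsetI)
    fix a :: "'a poly" assume "a \<in> monic_poly d ` ({1..d} \<rightarrow>\<^sub>E (UNIV :: 'a set))"
    then show "a \<in> monics d" by (auto simp: monics_def coeff_monic_poly)
  next
    fix a :: "'a poly" assume a: "a \<in> monics d"
    define x where "x = restrict (\<lambda>j. coeff a (d - j)) {1..d}"
    have "monic_poly d x = a"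
      by (rule poly_eqI) (use a in \<open>auto simp: coeff_monic_poly x_def monics_def coeff_eq_0\<close>)
    moreover have "x \<in> {1..d} \<rightarrow>\<^sub>E UNIV" by (simp add: x_def)
    ultimately show "a \<in> monic_poly d ` ({1..d} \<rightarrow>\<^sub>E (UNIV :: 'a set))" by blast
  qed
qed

lemma Kinf_of_poly_nth: "Kinf_of_poly a $$ k = (if k \<le> 0 then coeff a (nat (-k)) else 0)"
proof -
  have "Kinf_of_poly a $$ k = (\<Sum>i\<le>degree a. if i = nat (-k) \<and> k \<le> 0 then coeff a i else 0)"
    unfolding Kinf_of_poly_def fls_nth_sum by (intro sum.cong refl) auto
  then show ?thesis by (auto simp: sum.delta coeff_eq_0)
qed

text \<open>For monic \<open>a\<close>, \<open>a\<^sup>-\<^sup>1 = X^(deg a) (reflect a)\<^sup>-\<^sup>1\<close> expanded in \<open>X = 1/\<theta>\<close>.\<close>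
definition fps_inverse_monic :: "'a::field poly \<Rightarrow> 'a fps" where
  "fps_inverse_monic a = fps_X ^ degree a * inverse (fps_of_poly (reflect_poly a))"

lemma inverse_Kinf_of_poly:
  assumes "lead_coeff a = 1"
  shows "inverse (Kinf_of_poly a) = fps_to_fls (fps_inverse_monic a)"
proof -
  have "Kinf_of_poly a = fls_shift (int (degree a)) (fps_to_fls (fps_of_poly (reflect_poly a)))"
    by (rule fls_eqI) (auto simp: Kinf_of_poly_nth coeff_reflect_poly nat_diff_distrib coeff_eq_0
        intro!: arg_cong[where f = "coeff a"])
  moreover have "subdegree (fps_of_poly (reflect_poly a)) = 0"
    using assms by (simp add: subdegree_eq_0_iff coeff_reflect_poly)
  ultimately show ?thesis
    by (simp add: fps_inverse_monic_def fls_inverse_shift fls_inverse_fps_to_fls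
        fls_times_fps_to_fls fps_to_fls_power fls_X_power_times_conv_shift)
qed

section \<open>Weight and degree in the coordinates\<close>

definition weight_at_most :: "nat \<Rightarrow> nat set \<Rightarrow> bool" where
  "weight_at_most k S \<longleftrightarrow> finite S \<and> 0 \<notin> S \<and> \<Sum>S \<le> k"

lemma weight_at_most_empty [simp]: "weight_at_most k {}"
  by (simp add: weight_at_most_def)

lemma weight_at_most_Un:
  "weight_at_most i S \<Longrightarrow> weight_at_most j S' \<Longrightarrow> i + j \<le> k \<Longrightarrow> weight_at_most k (S \<union> S')"
  unfolding weight_at_most_def using sum_Un_nat[of S S' id] by auto

lemma local_span_weight_mult:
  assumes "f \<in> local_span (weight_at_most i)" "g \<in> local_span (weight_at_most j)" "i + j \<le> k"
  shows "(\<lambda>x. f x * g x) \<in> local_span (weight_at_most k)"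
  using assms by (blast intro: local_span_mult weight_at_most_Un)

text \<open>Each coefficient \<open>F x $ k\<close> is a polynomial of weight at most \<open>k\<close> when \<open>x j\<close> has weight \<open>j\<close>.\<close>
definition weighted_fps :: "((nat \<Rightarrow> 'a) \<Rightarrow> 'b::comm_ring_1 fps) \<Rightarrow> bool" where
  "weighted_fps F \<longleftrightarrow> (\<forall>k. (\<lambda>x. F x $ k) \<in> local_span (weight_at_most k))"

lemma weighted_fps_const: "weighted_fps (\<lambda>_. F)"
  by (simp add: weighted_fps_def local_span_const)

lemma weighted_fps_mult:
  assumes "weighted_fps F" "weighted_fps G"
  shows "weighted_fps (\<lambda>x. F x * G x)"
  unfolding weighted_fps_def fps_mult_nth
proof (intro allI local_span_sum)
  fix k i :: nat assume "i \<in> {0..k}"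
  then show "(\<lambda>x. F x $ i * G x $ (k - i)) \<in> local_span (weight_at_most k)"
    using assms unfolding weighted_fps_def by (auto intro: local_span_weight_mult)
qed

lemma weighted_fps_prod:
  "(\<And>j. j \<in> J \<Longrightarrow> weighted_fps (F j)) \<Longrightarrow> weighted_fps (\<lambda>x. \<Prod>j\<in>J. F j x)"
  by (induction J rule: infinite_finite_induct) (simp_all add: weighted_fps_const weighted_fps_mult)

lemma weighted_fps_power: "weighted_fps F \<Longrightarrow> weighted_fps (\<lambda>x. F x ^ e)"
  using weighted_fps_prod[of "{..<e}" "\<lambda>_. F"] by simp

lemma weighted_fps_inverse:
  fixes F :: "(nat \<Rightarrow> 'a) \<Rightarrow> 'b::field fps"
  assumes F: "weighted_fps F" and F0: "\<And>x. F x $ 0 = 1"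
  shows "weighted_fps (\<lambda>x. inverse (F x))"
proof -
  have "(\<lambda>x. inverse (F x) $ k) \<in> local_span (weight_at_most k)" for k
  proof (induction k rule: less_induct)
    case (less k)
    show ?case
    proof (cases "k = 0")
      case True
      then show ?thesis using F0 by (simp add: local_span_const)
    next
      case False
      have rec: "inverse (F x) $ k = - (\<Sum>i\<in>{1..k}. F x $ i * inverse (F x) $ (k - i))" for x
      proof -
        have "(F x * inverse (F x)) $ k = 0"
          using False F0[of x] by (simp add: inverse_mult_eq_1')
        moreover have "{0..k} = insert 0 {1..k}" by auto
        ultimately show ?thesis using F0[of x] by (simp add: fps_mult_nth eq_neg_iff_add_eq_0)
      qed
      have "(\<lambda>x. \<Sum>i\<in>{1..k}. F x $ i * inverse (F x) $ (k - i)) \<in> local_span (weight_at_most k)"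
      proof (rule local_span_sum)
        fix i assume "i \<in> {1..k}"
        with F less.IH[of "k - i"] show "(\<lambda>x. F x $ i * inverse (F x) $ (k - i)) \<in> local_span (weight_at_most k)"
          unfolding weighted_fps_def by (auto intro: local_span_weight_mult)
      qed
      then show ?thesis unfolding rec by (rule local_span_uminus)
    qed
  qed
  then show ?thesis by (simp add: weighted_fps_def)
qed

lemma weighted_fps_reflect_monic_poly:
  "weighted_fps (\<lambda>x. fps_of_poly (reflect_poly (monic_poly d x)))"
  unfolding weighted_fps_def
proof
  fix k
  let ?S = "if k = 0 \<or> d < k then {} else {k}"
  have "depends_only_on ?S (\<lambda>x. fps_of_poly (reflect_poly (monic_poly d x)) $ k)"
    by (auto simp: depends_only_on_def coeff_reflect_poly coeff_monic_poly)
  moreover have "weight_at_most k ?S" by (simp add: weight_at_most_def)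
  ultimately show "(\<lambda>x. fps_of_poly (reflect_poly (monic_poly d x)) $ k) \<in> local_span (weight_at_most k)"
    by (intro local_span_single)
qed

lemma weighted_fps_inverse_monic: "weighted_fps (\<lambda>x. fps_inverse_monic (monic_poly d x))"
  unfolding fps_inverse_monic_def degree_monic_poly
  by (intro weighted_fps_mult[OF weighted_fps_const] weighted_fps_inverse
      weighted_fps_reflect_monic_poly) (simp add: coeff_monic_poly)

definition card_at_most :: "nat \<Rightarrow> 'i set \<Rightarrow> bool" where
  "card_at_most k S \<longleftrightarrow> finite S \<and> card S \<le> k"

lemma card_at_most_empty [simp]: "card_at_most k {}"
  by (simp add: card_at_most_def)

lemma local_span_card_mult:
  assumes "f \<in> local_span (card_at_most i)" "g \<in> local_span (card_at_most j)"
  shows "(\<lambda>x. f x * g x) \<in> local_span (card_at_most (i + j))"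
proof (rule local_span_mult[OF assms])
  fix S S' :: "'i set" assume "card_at_most i S" "card_at_most j S'"
  then show "card_at_most (i + j) (S \<union> S')"
    unfolding card_at_most_def using card_Un_le[of S S'] by auto
qed

lemma local_span_card_prod:
  "(\<And>i. i \<in> I \<Longrightarrow> f i \<in> local_span (card_at_most (e i))) \<Longrightarrow>
     (\<lambda>x. \<Prod>i\<in>I. f i x) \<in> local_span (card_at_most (\<Sum>i\<in>I. e i))"
  by (induction I rule: infinite_finite_induct)
    (simp_all add: local_span_const local_span_card_mult)

text \<open>The coefficients of \<open>P x\<close> are polynomials of total degree at most \<open>e\<close> in the coordinates.\<close>
definition coeffs_degree_le :: "nat \<Rightarrow> (('i \<Rightarrow> 'a) \<Rightarrow> 'b::comm_ring_1 poly) \<Rightarrow> bool" where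
  "coeffs_degree_le e P \<longleftrightarrow> (\<forall>k. (\<lambda>x. coeff (P x) k) \<in> local_span (card_at_most e))"

lemma coeffs_degree_le_const: "coeffs_degree_le 0 (\<lambda>_. p)"
  by (simp add: coeffs_degree_le_def local_span_const)

lemma coeffs_degree_le_monic_poly: "coeffs_degree_le 1 (monic_poly d)"
  unfolding coeffs_degree_le_def
proof
  fix k
  have "depends_only_on {d - k} (\<lambda>x. coeff (monic_poly d x) k)"
    by (auto simp: depends_only_on_def coeff_monic_poly)
  then show "(\<lambda>x. coeff (monic_poly d x) k) \<in> local_span (card_at_most 1)"
    by (intro local_span_single) (simp_all add: card_at_most_def)
qed

lemma coeffs_degree_le_mult:
  assumes "coeffs_degree_le e P" "coeffs_degree_le e' Q"
  shows "coeffs_degree_le (e + e') (\<lambda>x. P x * Q x)"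
  using assms unfolding coeffs_degree_le_def coeff_mult
  by (intro allI local_span_sum local_span_card_mult) blast+

lemma coeffs_degree_le_prod:
  "(\<And>j. j \<in> J \<Longrightarrow> coeffs_degree_le (e j) (P j)) \<Longrightarrow>
     coeffs_degree_le (\<Sum>j\<in>J. e j) (\<lambda>x. \<Prod>j\<in>J. P j x)"
proof (induction J rule: infinite_finite_induct)
  case (insert j J)
  then have "coeffs_degree_le (e j + sum e J) (\<lambda>x. P j x * (\<Prod>j\<in>J. P j x))"
    by (intro coeffs_degree_le_mult) auto
  with insert show ?case by simp
qed (simp_all add: coeffs_degree_le_const[of 1, simplified])

lemma coeffs_degree_le_power: "coeffs_degree_le e P \<Longrightarrow> coeffs_degree_le (e * k) (\<lambda>x. P x ^ k)"
  using coeffs_degree_le_prod[of "{..<k}" "\<lambda>_. e" "\<lambda>_. P"] by (simp add: mult.commute)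

lemma char_coeff_local_span:
  assumes "r \<ge> 1"
  shows "(\<lambda>x. char_coeff s r m (t(0 := monic_poly d x)) \<alpha>)
           \<in> local_span (card_at_most (\<Sum>i<s. m 0 i))"
proof -
  have "coeffs_degree_le (m 0 i) (\<lambda>x. \<Prod>j<r. (t(0 := monic_poly d x)) j ^ m j i)" for i
  proof -
    have "coeffs_degree_le (\<Sum>j<r. if j = 0 then m 0 i else 0)
            (\<lambda>x. \<Prod>j<r. (t(0 := monic_poly d x)) j ^ m j i)"
      by (intro coeffs_degree_le_prod)
        (auto intro: coeffs_degree_le_const simp: coeffs_degree_le_power[OF coeffs_degree_le_monic_poly, simplified])
    then show ?thesis using assms by (simp add: sum.delta')
  qed
  then show ?thesis
    unfolding char_coeff_def coeffs_degree_le_def by (intro local_span_card_prod) blast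
qed

lemma card_mult_Suc_card_le_twice_sum:
  "finite A \<Longrightarrow> 0 \<notin> A \<Longrightarrow> card A * (card A + 1) \<le> 2 * \<Sum>A"
proof (induction "card A" arbitrary: A)
  case 0 then show ?case by simp
next
  case (Suc n A)
  define a where "a = Max A"
  have "A \<noteq> {}" using Suc.hyps(2) by auto
  then have a: "a \<in> A" using Suc.prems by (simp add: a_def)
  have "A \<subseteq> {1..a}" using Suc.prems by (auto simp: a_def Suc_le_eq intro!: gr0I)
  then have "card A \<le> a" using card_mono[of "{1..a}" A] by simp
  moreover have "card (A - {a}) = n" using Suc.hyps(2) Suc.prems a by simp
  then have "n * (n + 1) \<le> 2 * \<Sum>(A - {a})"
    using Suc.hyps(1)[of "A - {a}"] Suc.prems by simp
  moreover have "\<Sum>A = a + \<Sum>(A - {a})" using Suc.prems a by (simp add: sum.remove)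
  ultimately show ?case using Suc.hyps(2)[symmetric] by (simp add: algebra_simps)
qed

text \<open>The part of weight at most \<open>K\<close> must contain \<open>d - M\<close> distinct positive integers.\<close>
lemma cover_weight_card_bound:
  assumes "weight_at_most K A" "card_at_most M B" "{1..d} \<subseteq> A \<union> B"
  shows "(d - M) * (d - M + 1) \<le> 2 * K"
proof -
  define A' where "A' = {1..d} - B"
  have "A' \<subseteq> A" using assms(3) by (auto simp: A'_def)
  with assms(1) have A': "finite A'" "0 \<notin> A'" "\<Sum>A' \<le> K"
    unfolding weight_at_most_def by (auto intro: finite_subset order_trans[OF sum_mono2])
  have "d - M \<le> card A'"
    using assms(2) diff_card_le_card_Diff[of B "{1..d}"] by (auto simp: A'_def card_at_most_def)
  then have "(d - M) * (d - M + 1) \<le> card A' * (card A' + 1)" by (intro mult_le_mono) auto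
  also have "\<dots> \<le> 2 * K"
    using card_mult_Suc_card_le_twice_sum[OF A'(1,2)] A'(3) by linarith
  finally show ?thesis .
qed

lemma sum_PiE_weighted_coeff_times_eq_0:
  fixes \<Phi> :: "(nat \<Rightarrow> 'a::{finite,field}) \<Rightarrow> 'a fps"
  assumes \<Phi>: "weighted_fps \<Phi>" and c: "c \<in> local_span (card_at_most M)"
    and k: "2 * k < (d - M) * (d - M + 1)"
  shows "(\<Sum>x\<in>{1..d} \<rightarrow>\<^sub>E UNIV. \<Phi> x $ k * c x) = 0"
proof (rule sum_PiE_local_span_eq_0)
  let ?Q = "\<lambda>S. \<exists>A B. S = A \<union> B \<and> weight_at_most k A \<and> card_at_most M B"
  show "(\<lambda>x. \<Phi> x $ k * c x) \<in> local_span ?Q"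
    using \<Phi> unfolding weighted_fps_def by (intro local_span_mult[OF _ c]) blast+
  show "\<not> {1..d} \<subseteq> S" if "?Q S" for S
    using that k cover_weight_card_bound[of k _ M _ d] by fastforce
qed simp

section \<open>Vanishing of the coefficients of \<open>S\<^sub>d\<close>\<close>

definition tuple_tails :: "nat \<Rightarrow> nat \<Rightarrow> (nat \<Rightarrow> 'a::field poly) set" where
  "tuple_tails r d = (\<lambda>as. as(0 := undefined)) ` tuples r d"

lemma sum_tuples_split:
  assumes r: "r \<ge> 1"
  shows "(\<Sum>as\<in>tuples r d. f as) =
    (\<Sum>t\<in>tuple_tails r d. \<Sum>x\<in>{1..d} \<rightarrow>\<^sub>E UNIV. f (t(0 := monic_poly d x)))"
proof -
  have bij: "bij_betw (\<lambda>(a, t). t(0 := a)) (monics d \<times> tuple_tails r d) (tuples r d)"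
  proof (rule bij_betw_byWitness[where f' = "\<lambda>as. (as 0, as(0 := undefined))"])
    show "(\<lambda>(a, t). t(0 := a)) ` (monics d \<times> tuple_tails r d) \<subseteq> tuples r d"
      using r by (fastforce simp: tuple_tails_def tuples_def monics_def PiE_def extensional_def)
    show "(\<lambda>as. (as 0, as(0 := undefined))) ` tuples r d \<subseteq> monics d \<times> tuple_tails r d"
      using r by (auto simp: tuple_tails_def tuples_def monics_def PiE_def Pi_def)
  qed (auto simp: tuple_tails_def)
  have "(\<Sum>as\<in>tuples r d. f as) = (\<Sum>(a, t)\<in>monics d \<times> tuple_tails r d. f (t(0 := a)))"
    using sum.reindex_bij_betw[OF bij, of f] by (simp add: case_prod_unfold)
  also have "\<dots> = (\<Sum>t\<in>tuple_tails r d. \<Sum>a\<in>monics d. f (t(0 := a)))"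
    by (simp add: sum.cartesian_product[symmetric] sum.swap[of _ "monics d"])
  also have "\<dots> = (\<Sum>t\<in>tuple_tails r d. \<Sum>x\<in>{1..d} \<rightarrow>\<^sub>E UNIV. f (t(0 := monic_poly d x)))"
    by (intro sum.cong refl sum.reindex_bij_betw[OF bij_betw_monic_poly, symmetric])
  finally show ?thesis .
qed

lemma fps_to_fls_sum: "fps_to_fls (\<Sum>i\<in>I. f i) = (\<Sum>i\<in>I. fps_to_fls (f i))"
  by (induction I rule: infinite_finite_induct) simp_all

lemma fps_to_fls_prod:
  "fps_to_fls (\<Prod>i\<in>I. f i) = (\<Prod>i\<in>I. fps_to_fls (f i :: 'a::comm_ring_1 fps))"
  by (induction I rule: infinite_finite_induct) (simp_all add: fls_times_fps_to_fls)

text \<open>The coefficient of \<open>t^\<alpha>\<close> in \<open>S\<^sub>d\<close>, which has no negative powers of \<open>X = 1/\<theta>\<close>.\<close>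
definition S_fps ::
  "nat \<Rightarrow> nat \<Rightarrow> (nat \<Rightarrow> nat \<Rightarrow> nat) \<Rightarrow> (nat \<Rightarrow> nat) \<Rightarrow> nat \<Rightarrow> (nat \<Rightarrow> nat) \<Rightarrow> 'a::field fps" where
  "S_fps s r m n d \<alpha> =
     (\<Sum>as\<in>tuples r d. (\<Prod>j<r. fps_inverse_monic (as j) ^ n j) * fps_const (char_coeff s r m as \<alpha>))"

lemma S_coeff_eq_fps_to_fls: "S_coeff s r m n d \<alpha> = fps_to_fls (S_fps s r m n d \<alpha>)"
  unfolding S_coeff_def S_fps_def fps_to_fls_sum
proof (rule sum.cong)
  fix as assume "as \<in> tuples r d"
  then have "lead_coeff (as j) = 1" if "j < r" for j
    using that by (auto simp: tuples_def)
  then show "(\<Prod>j<r. inverse (Kinf_of_poly (as j)) ^ n j) * fls_const (char_coeff s r m as \<alpha>) =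
      fps_to_fls ((\<Prod>j<r. fps_inverse_monic (as j) ^ n j) * fps_const (char_coeff s r m as \<alpha>))"
    by (simp add: inverse_Kinf_of_poly fls_times_fps_to_fls fps_to_fls_prod fps_to_fls_power)
qed simp

lemma S_fps_nth_eq_0:
  fixes k :: nat
  assumes r: "r \<ge> 1" and k: "2 * k < (d - (\<Sum>i<s. m 0 i)) * (d - (\<Sum>i<s. m 0 i) + 1)"
  shows "(S_fps s r m n d \<alpha> :: 'a::{finite,field} fps) $ k = 0"
proof -
  let ?\<Phi> = "\<lambda>t x. \<Prod>j<r. fps_inverse_monic ((t(0 := monic_poly d x)) j) ^ n j"
  let ?c = "\<lambda>t x. char_coeff s r m (t(0 := monic_poly d x)) \<alpha>"
  have \<Phi>: "weighted_fps (?\<Phi> t)" for t :: "nat \<Rightarrow> 'a poly"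
  proof (intro weighted_fps_prod weighted_fps_power)
    fix j show "weighted_fps (\<lambda>x. fps_inverse_monic ((t(0 := monic_poly d x)) j))"
      by (cases "j = 0") (simp_all add: weighted_fps_inverse_monic weighted_fps_const)
  qed
  have "(\<Sum>x\<in>{1..d} \<rightarrow>\<^sub>E UNIV. ?\<Phi> t x $ k * ?c t x) = 0" for t :: "nat \<Rightarrow> 'a poly"
    using \<Phi>[of t] char_coeff_local_span[OF r, of s m t d \<alpha>] k
    by (rule sum_PiE_weighted_coeff_times_eq_0)
  then show ?thesis
    by (simp add: S_fps_def fps_sum_nth sum_tuples_split[OF r])
qed

lemma S_fps_nth_eq_0_if_large_degree:
  assumes "r \<ge> 1" "k + (\<Sum>i<s. m 0 i) < d"
  shows "(S_fps s r m n d \<alpha> :: 'a::{finite,field} fps) $ k = 0"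
proof (rule S_fps_nth_eq_0[OF assms(1)])
  have "(k + 1) * (k + 2) \<le> (d - (\<Sum>i<s. m 0 i)) * (d - (\<Sum>i<s. m 0 i) + 1)"
    using assms(2) by (intro mult_le_mono) auto
  then show "2 * k < (d - (\<Sum>i<s. m 0 i)) * (d - (\<Sum>i<s. m 0 i) + 1)" by simp
qed

lemma degree_le_of_tuples: "as \<in> tuples r d \<Longrightarrow> j < r \<Longrightarrow> degree (as j) \<le> d"
proof (induction j)
  case 0 then show ?case by (simp add: tuples_def)
next
  case (Suc j)
  then have "degree (as (Suc j)) < degree (as j)" by (simp add: tuples_def)
  with Suc show ?case by simp
qed

lemma char_coeff_eq_0_if_mdeg:
  assumes "as \<in> tuples r d" "d * (\<Sum>i<s. \<Sum>j<r. m j i) < mdeg s \<alpha>"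
  shows "char_coeff s r m as \<alpha> = (0::'a::field)"
proof (rule ccontr)
  assume "char_coeff s r m as \<alpha> \<noteq> 0"
  then have "\<alpha> i \<le> d * (\<Sum>j<r. m j i)" if i: "i < s" for i
  proof -
    have "coeff (\<Prod>j<r. as j ^ m j i) (\<alpha> i) \<noteq> 0"
      using \<open>char_coeff s r m as \<alpha> \<noteq> 0\<close> i by (auto simp: char_coeff_def)
    then have "\<alpha> i \<le> degree (\<Prod>j<r. as j ^ m j i)" by (rule le_degree)
    also have "\<dots> \<le> (\<Sum>j<r. degree (as j) * m j i)"
      by (rule order_trans[OF degree_prod_sum_le sum_mono]) (auto simp: degree_power_le)
    also have "\<dots> \<le> (\<Sum>j<r. d * m j i)"
      by (intro sum_mono mult_le_mono1) (use degree_le_of_tuples[OF assms(1)] in auto)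
    finally show ?thesis by (simp add: sum_distrib_left)
  qed
  then have "mdeg s \<alpha> \<le> d * (\<Sum>i<s. \<Sum>j<r. m j i)"
    unfolding mdeg_def sum_distrib_left by (intro sum_mono) auto
  with assms(2) show False by simp
qed

lemma S_fps_eq_0_if_mdeg:
  "d * (\<Sum>i<s. \<Sum>j<r. m j i) < mdeg s \<alpha> \<Longrightarrow> (S_fps s r m n d \<alpha> :: 'a::field fps) = 0"
  unfolding S_fps_def by (intro sum.neutral) (simp add: char_coeff_eq_0_if_mdeg)

section \<open>Convergence and growth of the multiple zeta value\<close>

text \<open>
  As the \<open>X^k\<close>-coefficient of \<open>S\<^sub>d\<close> vanishes for \<open>d > k + M\<close>, this is the
  coefficientwise sum of the series.
\<close>
definition zeta_fps ::
  "nat \<Rightarrow> nat \<Rightarrow> (nat \<Rightarrow> nat \<Rightarrow> nat) \<Rightarrow> (nat \<Rightarrow> nat) \<Rightarrow> (nat \<Rightarrow> nat) \<Rightarrow> 'a::field fps" where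
  "zeta_fps s r m n \<alpha> = Abs_fps (\<lambda>k. \<Sum>d\<le>k + (\<Sum>i<s. m 0 i). S_fps s r m n d \<alpha> $ k)"

lemma partial_sum_minus_zeta_fps_nth:
  assumes "r \<ge> 1" "k + (\<Sum>i<s. m 0 i) < D"
  shows "((\<Sum>d<D. S_fps s r m n d \<alpha>) - zeta_fps s r m n \<alpha> :: 'a::{finite,field} fps) $ k = 0"
proof -
  have "(\<Sum>d<D. (S_fps s r m n d \<alpha> :: 'a fps) $ k) = (\<Sum>d\<le>k + (\<Sum>i<s. m 0 i). S_fps s r m n d \<alpha> $ k)"
  proof (rule sum.mono_neutral_right)
    show "\<forall>d\<in>{..<D} - {..k + (\<Sum>i<s. m 0 i)}. (S_fps s r m n d \<alpha> :: 'a fps) $ k = 0"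
      by (auto intro!: S_fps_nth_eq_0_if_large_degree[OF assms(1)])
  qed (use assms in auto)
  then show ?thesis by (simp add: zeta_fps_def fps_sum_nth)
qed

lemma zeta_fps_nth_eq_0:
  fixes k s r :: nat and m :: "nat \<Rightarrow> nat \<Rightarrow> nat"
  defines "M \<equiv> \<Sum>i<s. m 0 i" and "P \<equiv> (\<Sum>i<s. \<Sum>j<r. m j i) + 1"
  assumes r: "r \<ge> 1" and k: "2 * k < (mdeg s \<alpha> div P - M) * (mdeg s \<alpha> div P - M + 1)"
  shows "(zeta_fps s r m n \<alpha> :: 'a::{finite,field} fps) $ k = 0"
proof -
  have "(S_fps s r m n d \<alpha> :: 'a fps) $ k = 0" for d
  proof (cases "d * (\<Sum>i<s. \<Sum>j<r. m j i) < mdeg s \<alpha>")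
    case True
    then show ?thesis by (simp add: S_fps_eq_0_if_mdeg)
  next
    case False
    then have "mdeg s \<alpha> div P \<le> d * P div P"
      by (intro div_le_mono) (simp add: P_def algebra_simps)
    also have "d * P div P = d"
      unfolding P_def by (rule div_mult_self_is_m) simp
    finally have "(mdeg s \<alpha> div P - M) * (mdeg s \<alpha> div P - M + 1) \<le> (d - M) * (d - M + 1)"
      by (intro mult_le_mono) auto
    with k have "2 * k < (d - M) * (d - M + 1)" by linarith
    then show ?thesis unfolding M_def by (rule S_fps_nth_eq_0[OF r])
  qed
  then show ?thesis by (simp add: zeta_fps_def)
qed

lemma absK_fps_to_fls_le:
  fixes f :: "'a::{finite,field} fps"
  assumes "\<And>k. k < N \<Longrightarrow> f $ k = 0"
  shows "absK (fps_to_fls f) \<le> (1/2) ^ N"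
proof (cases "f = 0")
  case True then show ?thesis by (simp add: absK_def)
next
  case False
  define q where "q = real (card (UNIV :: 'a set))"
  have "card {0::'a, 1} \<le> card (UNIV :: 'a set)" by (rule card_mono) auto
  then have q: "2 \<le> q" by (simp add: q_def)
  have "N \<le> subdegree f" using False assms by (intro subdegree_geI) auto
  then have "absK (fps_to_fls f) \<le> q powr (- real N)"
    using False q by (auto simp: absK_def q_def fls_subdegree_fls_to_fps intro!: powr_mono)
  also have "\<dots> = (1 / q) ^ N" using q by (simp add: powr_minus powr_realpow power_one_over inverse_eq_divide)
  also have "\<dots> \<le> (1/2) ^ N" using q by (intro power_mono divide_left_mono) auto
  finally show ?thesis .
qed

lemma superlinear_two_power_tendsto_0:
  fixes f :: "nat \<Rightarrow> nat" and R :: real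
  assumes "\<And>C. \<forall>\<^sub>F L in sequentially. C * L \<le> f L"
  shows "(\<lambda>L. (1/2) ^ f L * R ^ L) \<longlonglongrightarrow> 0"
proof -
  obtain J where J: "\<bar>R\<bar> < 2 ^ J" using real_arch_pow[of 2 "\<bar>R\<bar>"] by auto
  have lim: "(\<lambda>L. (1/2::real) ^ L) \<longlonglongrightarrow> 0" by (rule LIMSEQ_realpow_zero) auto
  have "\<forall>\<^sub>F L in sequentially. norm ((1/2) ^ f L * R ^ L) \<le> norm ((1/2::real) ^ L) * 1"
    using assms[of "J + 1"]
  proof eventually_elim
    case (elim L)
    have "norm ((1/2) ^ f L * R ^ L) \<le> (1/2) ^ ((J + 1) * L) * (2 ^ J) ^ L"
      using elim J by (auto simp: abs_mult power_abs intro!: mult_mono power_decreasing power_mono)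
    also have "\<dots> = (1/2) ^ L" by (simp add: power_mult power_add power_mult_distrib field_simps)
    finally show ?case by simp
  qed
  with lim show ?thesis by (rule tendsto_0_le)
qed

lemma eventually_linear_le_triangular_div:
  fixes C M P :: nat
  assumes P: "P > 0"
  shows "\<forall>\<^sub>F L in sequentially. C * L \<le> (L div P - M) * (L div P - M + 1) div 2"
proof -
  define U where "U = 2 * C * P * (M + 2)"
  have "C * L \<le> (L div P - M) * (L div P - M + 1) div 2" if L: "P * (M + U + 1) \<le> L" for L
  proof -
    define u where "u = L div P - M"
    have "M + U + 1 \<le> L div P"
      using div_le_mono[OF L, of P] P by simp
    then have u: "U + 1 \<le> u" by (simp add: u_def)
    have "L < P * (L div P) + P"
      using mult_div_mod_eq[of P L] mod_less_divisor[OF P, of L] by linarith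
    then have "L \<le> P * (u + M + 1)"
      using \<open>M + U + 1 \<le> L div P\<close> by (simp add: u_def algebra_simps)
    then have "C * L \<le> C * P * (u + M + 1)"
      unfolding mult.assoc by (rule mult_le_mono2)
    also have "\<dots> \<le> C * P * ((M + 2) * u)"
    proof (intro mult_le_mono2)
      have "M \<le> M * u" using u by simp
      then show "u + M + 1 \<le> (M + 2) * u"
        unfolding add_mult_distrib using u by linarith
    qed
    also have "\<dots> = U * u div 2"
    proof -
      have "U * u = 2 * (C * P * ((M + 2) * u))" by (simp add: U_def algebra_simps)
      then show ?thesis by simp
    qed
    also have "\<dots> \<le> u * (u + 1) div 2"
    proof (rule div_le_mono)
      have "U * u \<le> (u + 1) * u" using u by (intro mult_le_mono1) linarith
      then show "U * u \<le> u * (u + 1)" by (simp only: mult.commute)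
    qed
    finally show ?thesis by (simp add: u_def)
  qed
  then show ?thesis unfolding eventually_sequentially by blast
qed

lemma finite_Idx_mdeg_less: "finite {\<alpha>\<in>Idx s. mdeg s \<alpha> < L}"
proof (rule finite_subset)
  show "{\<alpha>\<in>Idx s. mdeg s \<alpha> < L} \<subseteq> (\<lambda>\<beta> i. if i < s then \<beta> i else 0) ` ({..<s} \<rightarrow>\<^sub>E {..<L})"
  proof
    fix \<alpha> assume \<alpha>: "\<alpha> \<in> {\<alpha>\<in>Idx s. mdeg s \<alpha> < L}"
    have "\<alpha> i < L" if "i < s" for i
      using \<alpha> member_le_sum[of i "{..<s}" \<alpha>] that by (auto simp: mdeg_def)
    then have "restrict \<alpha> {..<s} \<in> {..<s} \<rightarrow>\<^sub>E {..<L}" by auto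
    moreover have "\<alpha> = (\<lambda>i. if i < s then restrict \<alpha> {..<s} i else 0)"
      using \<alpha> by (auto simp: Idx_def)
    ultimately show "\<alpha> \<in> (\<lambda>\<beta> i. if i < s then \<beta> i else 0) ` ({..<s} \<rightarrow>\<^sub>E {..<L})" by blast
  qed
qed (intro finite_imageI finite_PiE; simp)

lemma absK_partial_sum_minus_zeta_le:
  assumes "r \<ge> 1" "N + (\<Sum>i<s. m 0 i) \<le> D"
  shows "absK ((\<Sum>d<D. S_coeff s r m n d \<alpha>) - fps_to_fls (zeta_fps s r m n \<alpha>)
           :: 'a::{finite,field} fls) \<le> (1/2) ^ N"
proof -
  have "(\<Sum>d<D. S_coeff s r m n d \<alpha>) - fps_to_fls (zeta_fps s r m n \<alpha>) =
      fps_to_fls ((\<Sum>d<D. S_fps s r m n d \<alpha>) - zeta_fps s r m n \<alpha> :: 'a fps)"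
    by (simp add: S_coeff_eq_fps_to_fls fps_to_fls_sum)
  also have "absK \<dots> \<le> (1/2) ^ N"
    using assms by (intro absK_fps_to_fls_le partial_sum_minus_zeta_fps_nth) auto
  finally show ?thesis .
qed

lemma zeta_uniform_convergence:
  assumes "r \<ge> 1" "\<epsilon> > 0"
  shows "\<exists>D0. \<forall>D\<ge>D0. \<forall>\<alpha>. absK ((\<Sum>d<D. S_coeff s r m n d \<alpha>) - fps_to_fls (zeta_fps s r m n \<alpha>)
           :: 'a::{finite,field} fls) < \<epsilon>"
proof -
  obtain N where N: "(1/2) ^ N < \<epsilon>" using real_arch_pow_inv[OF assms(2), of "1/2"] by auto
  show ?thesis
    by (intro exI[of _ "N + (\<Sum>i<s. m 0 i)"] allI impI order_le_less_trans[OF _ N]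
        absK_partial_sum_minus_zeta_le[OF assms(1)])
qed

lemma zeta_coeff_rapid_decay:
  fixes R \<epsilon> :: real
  assumes r: "r \<ge> 1" and R: "R > 0" and \<epsilon>: "\<epsilon> > 0"
  shows "finite {\<alpha>\<in>Idx s. absK (fps_to_fls (zeta_fps s r m n \<alpha>) :: 'a::{finite,field} fls)
                              * R ^ mdeg s \<alpha> \<ge> \<epsilon>}"
proof -
  define M where "M = (\<Sum>i<s. m 0 i)"
  define P where "P = (\<Sum>i<s. \<Sum>j<r. m j i) + 1"
  define f where "f L = (L div P - M) * (L div P - M + 1) div 2" for L
  have decay: "absK (fps_to_fls (zeta_fps s r m n \<alpha>) :: 'a fls) \<le> (1/2) ^ f (mdeg s \<alpha>)" for \<alpha>
  proof (rule absK_fps_to_fls_le)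
    fix k assume "k < f (mdeg s \<alpha>)"
    then show "(zeta_fps s r m n \<alpha> :: 'a fps) $ k = 0"
      unfolding f_def M_def P_def by (intro zeta_fps_nth_eq_0[OF r]) linarith
  qed
  have "(\<lambda>L. (1/2) ^ f L * R ^ L) \<longlonglongrightarrow> 0"
    unfolding f_def
    by (intro superlinear_two_power_tendsto_0 eventually_linear_le_triangular_div) (simp add: P_def)
  from order_tendstoD(2)[OF this \<epsilon>] obtain L0 where L0: "\<And>L. L \<ge> L0 \<Longrightarrow> (1/2) ^ f L * R ^ L < \<epsilon>"
    unfolding eventually_sequentially by blast
  have "{\<alpha>\<in>Idx s. absK (fps_to_fls (zeta_fps s r m n \<alpha>) :: 'a fls) * R ^ mdeg s \<alpha> \<ge> \<epsilon>}
          \<subseteq> {\<alpha>\<in>Idx s. mdeg s \<alpha> < L0}"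
  proof (clarify, rule ccontr)
    fix \<alpha> assume "\<epsilon> \<le> absK (fps_to_fls (zeta_fps s r m n \<alpha>) :: 'a fls) * R ^ mdeg s \<alpha>"
      and "\<not> mdeg s \<alpha> < L0"
    moreover have "absK (fps_to_fls (zeta_fps s r m n \<alpha>) :: 'a fls) * R ^ mdeg s \<alpha>
                     \<le> (1/2) ^ f (mdeg s \<alpha>) * R ^ mdeg s \<alpha>"
      using decay R by (intro mult_right_mono) auto
    ultimately show False using L0[of "mdeg s \<alpha>"] by linarith
  qed
  then show ?thesis using finite_Idx_mdeg_less by (rule finite_subset)
qed

theorem proposition1:
  fixes s r :: nat
    and n :: "nat \<Rightarrow> nat"
    and m :: "nat \<Rightarrow> nat \<Rightarrow> nat"
    and field_witness :: "'a::{finite,field} itself"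
  assumes "s \<ge> 1" and "r \<ge> 1"
    and "\<forall>j<r. n j \<ge> 1"
  shows "\<exists>c :: (nat \<Rightarrow> nat) \<Rightarrow> 'a fls.
      (\<forall>\<epsilon>>0. \<exists>D0. \<forall>D\<ge>D0. \<forall>\<alpha>\<in>Idx s.
          absK ((\<Sum>d<D. S_coeff s r m n d \<alpha>) - c \<alpha>) < \<epsilon>)
    \<and> (\<forall>\<epsilon>>0. finite {\<alpha>\<in>Idx s. absK (c \<alpha>) \<ge> \<epsilon>})
    \<and> (\<forall>R>0. \<forall>\<epsilon>>0. finite {\<alpha>\<in>Idx s. absK (c \<alpha>) * R ^ mdeg s \<alpha> \<ge> \<epsilon>})"
proof -
  let ?c = "\<lambda>\<alpha>. fps_to_fls (zeta_fps s r m n \<alpha>) :: 'a fls"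
  have "\<forall>\<epsilon>>0. \<exists>D0. \<forall>D\<ge>D0. \<forall>\<alpha>\<in>Idx s. absK ((\<Sum>d<D. S_coeff s r m n d \<alpha>) - ?c \<alpha>) < \<epsilon>"
    using zeta_uniform_convergence[OF assms(2)] by blast
  moreover have "\<forall>R>0. \<forall>\<epsilon>>0. finite {\<alpha>\<in>Idx s. absK (?c \<alpha>) * R ^ mdeg s \<alpha> \<ge> \<epsilon>}"
    using zeta_coeff_rapid_decay[OF assms(2)] by blast
  moreover have "\<forall>\<epsilon>>0. finite {\<alpha>\<in>Idx s. absK (?c \<alpha>) \<ge> \<epsilon>}"
    using zeta_coeff_rapid_decay[OF assms(2) zero_less_one] by simp blast
  ultimately show ?thesis by (intro exI[of _ ?c]) blast
qed

end
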